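(* Let $\Gamma$ be a highly-regular graph with $3\le\operatorname{diam}(\Gamma)<\infty$. Then the complement $\overline{\Gamma}$ is a highly-regular graph with $\operatorname{diam}(\overline{\Gamma})=2$ which is not distance-regular.
   Context: All graphs are finite, undirected, without loops or multiple edges; the diameter of a disconnected graph is $\infty$. $\overline{\Gamma}$ has vertex set $V(\Gamma)$ and edges exactly the pairs of distinct vertices not adjacent in $\Gamma$. A graph $\Gamma$ of order $n$ is highly-regular with collapsed adjacency matrix (CAM) $C=[c_{i,j}]_{1\le i,j\le m}$, where $2\le m<n$ (the value $m=n$ is allowed only when $n=2$), if for every vertex $u$ there is a partition of $V(\Gamma)$ into nonempty sets $V_1(u)=\{u\},V_2(u),\dots,V_m(u)$ such that for all $i,j$, every vertex $y\in V_j(u)$ is adjacent to exactly $c_{i,j}$ vertices of $V_i(u)$. A connected graph $\Gamma$ is distance-regular if for all $u,v$ the numbers $|D_1(v)\cap D_{i-1}(u)|$, $|D_1(v)\cap D_i(u)|$, $|D_1(v)\cap D_{i+1}(u)|$ depend only on $i=d(u,v)$, where $D_i(u)=\{v:d(u,v)=i\}$. *)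

theory Defs
  imports Main "HOL-Library.Extended_Nat"
begin

text \<open>A finite simple graph: finite vertex set V, adjacency relation E that is
symmetric and irreflexive (only its restriction to V matters).\<close>
definition graph :: "'a set \<Rightarrow> ('a \<Rightarrow> 'a \<Rightarrow> bool) \<Rightarrow> bool" where
  "graph V E \<longleftrightarrow> finite V \<and> (\<forall>x y. E x y \<longrightarrow> E y x) \<and> (\<forall>x. \<not> E x x)"

definition compl_graph :: "'a set \<Rightarrow> ('a \<Rightarrow> 'a \<Rightarrow> bool) \<Rightarrow> 'a \<Rightarrow> 'a \<Rightarrow> bool" where
  "compl_graph V E x y \<longleftrightarrow> x \<in> V \<and> y \<in> V \<and> x \<noteq> y \<and> \<not> E x y"

definition walk :: "'a set \<Rightarrow> ('a \<Rightarrow> 'a \<Rightarrow> bool) \<Rightarrow> 'a list \<Rightarrow> bool" where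
  "walk V E xs \<longleftrightarrow> xs \<noteq> [] \<and> set xs \<subseteq> V \<and> (\<forall>i. Suc i < length xs \<longrightarrow> E (xs ! i) (xs ! Suc i))"

definition gdist :: "'a set \<Rightarrow> ('a \<Rightarrow> 'a \<Rightarrow> bool) \<Rightarrow> 'a \<Rightarrow> 'a \<Rightarrow> enat" where
  "gdist V E u v = (INF xs \<in> {xs. walk V E xs \<and> hd xs = u \<and> last xs = v}. enat (length xs - 1))"

definition diam :: "'a set \<Rightarrow> ('a \<Rightarrow> 'a \<Rightarrow> bool) \<Rightarrow> enat" where
  "diam V E = (SUP u \<in> V. SUP v \<in> V. gdist V E u v)"

text \<open>Highly-regular: there are m and a collapsed adjacency matrix C such that for
every vertex u there is a partition of V into nonempty cells labelled 1..m
(given by a labelling P), with cell 1 equal to {u}, and every y in cell j has exactly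
C i j neighbours in cell i.\<close>
definition highly_regular :: "'a set \<Rightarrow> ('a \<Rightarrow> 'a \<Rightarrow> bool) \<Rightarrow> bool" where
  "highly_regular V E \<longleftrightarrow>
    (\<exists>(m::nat) (C::nat \<Rightarrow> nat \<Rightarrow> nat).
      ((2 \<le> m \<and> m < card V) \<or> (m = card V \<and> card V = 2)) \<and>
      (\<forall>u\<in>V. \<exists>P :: 'a \<Rightarrow> nat.
         (\<forall>x\<in>V. P x \<in> {1..m}) \<and>
         {x\<in>V. P x = 1} = {u} \<and>
         (\<forall>i\<in>{1..m}. \<exists>x\<in>V. P x = i) \<and>
         (\<forall>i\<in>{1..m}. \<forall>j\<in>{1..m}. \<forall>y\<in>V. P y = j \<longrightarrow>
             card {x\<in>V. P x = i \<and> E x y} = C i j)))"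

definition dsphere :: "'a set \<Rightarrow> ('a \<Rightarrow> 'a \<Rightarrow> bool) \<Rightarrow> 'a \<Rightarrow> nat \<Rightarrow> 'a set" where
  "dsphere V E u i = {v\<in>V. gdist V E u v = enat i}"

definition nbrs :: "'a set \<Rightarrow> ('a \<Rightarrow> 'a \<Rightarrow> bool) \<Rightarrow> 'a \<Rightarrow> 'a set" where
  "nbrs V E v = {x\<in>V. E v x}"

text \<open>Distance-regular: connected, and the numbers |D_1(v) \<inter> D_{i-1}(u)|,
|D_1(v) \<inter> D_i(u)|, |D_1(v) \<inter> D_{i+1}(u)| depend only on i = d(u,v)
(D_{-1} = \<emptyset>, so the first count is only compared for i \<ge> 1).\<close>
definition distance_regular :: "'a set \<Rightarrow> ('a \<Rightarrow> 'a \<Rightarrow> bool) \<Rightarrow> bool" where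
  "distance_regular V E \<longleftrightarrow>
    (\<forall>u\<in>V. \<forall>v\<in>V. gdist V E u v < \<infinity>) \<and>
    (\<forall>u\<in>V. \<forall>v\<in>V. \<forall>u'\<in>V. \<forall>v'\<in>V. \<forall>i::nat.
       gdist V E u v = enat i \<and> gdist V E u' v' = enat i \<longrightarrow>
       (i \<ge> 1 \<longrightarrow> card (nbrs V E v \<inter> dsphere V E u (i - 1)) = card (nbrs V E v' \<inter> dsphere V E u' (i - 1))) \<and>
       card (nbrs V E v \<inter> dsphere V E u i) = card (nbrs V E v' \<inter> dsphere V E u' i) \<and>
       card (nbrs V E v \<inter> dsphere V E u (i + 1)) = card (nbrs V E v' \<inter> dsphere V E u' (i + 1)))"

end

theory Submission
  imports Defs
begin

text \<open>
The cell sizes \<open>|V\<^sub>i(u)|\<close> do not depend on \<open>u\<close>: along an edge \<open>a b\<close> of the connected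
graph, double counting the edges between the cells of \<open>a\<close> and \<open>b\<close> determines the size of the
cell of \<open>b\<close> from that of \<open>a\<close>. Hence the same partitions show that the complement is
highly-regular, with matrix \<open>|V\<^sub>i| - \<delta>\<^sub>i\<^sub>j - c\<^sub>i\<^sub>j\<close>, and \<open>\<Gamma>\<close> is \<open>k\<close>-regular.
A shortest path \<open>x a b y\<close> with \<open>d(x,y) = 3\<close> gives \<open>N(x) \<inter> N(y) = \<emptyset>\<close>, so \<open>2k < |V|\<close>:
any two vertices have a common non-neighbour and the complement has diameter 2.
Vertices \<open>p, q\<close> adjacent in the complement have \<open>|V| - 2 - |N(p) \<union> N(q)|\<close> common
neighbours there; this is \<open>|V| - 2 - 2k\<close> for \<open>{x, y}\<close> but more for \<open>{x, b}\<close>, since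
\<open>a \<in> N(x) \<inter> N(b)\<close>, so the complement is not distance-regular.
\<close>

lemma walk_singleton [simp]: "walk V E [x] \<longleftrightarrow> x \<in> V"
  unfolding walk_def by auto

lemma walk_Cons:
  assumes "ys \<noteq> []"
  shows "walk V E (z # ys) \<longleftrightarrow> z \<in> V \<and> E z (hd ys) \<and> walk V E ys"
  using assms unfolding walk_def
  by (cases ys) (auto simp: nth_Cons split: nat.splits)

lemma walk_drop: "walk V E w \<Longrightarrow> j < length w \<Longrightarrow> walk V E (drop j w)"
  using set_drop_subset[of j w] unfolding walk_def by auto

lemma gdist_le_walk:
  "walk V E xs \<Longrightarrow> hd xs = u \<Longrightarrow> last xs = v \<Longrightarrow> gdist V E u v \<le> enat (length xs - 1)"
  unfolding gdist_def by (rule INF_lower) auto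

lemma gdist_less_iff:
  "gdist V E u v < a \<longleftrightarrow> (\<exists>xs. walk V E xs \<and> hd xs = u \<and> last xs = v \<and> enat (length xs - 1) < a)"
  unfolding gdist_def by (simp add: INF_less_iff)

lemma gdist_less_2:
  assumes "gdist V E u v < 2"
  shows "u = v \<or> E u v"
proof -
  obtain xs where xs: "walk V E xs" "hd xs = u" "last xs = v" "length xs - 1 < 2"
    using assms by (auto simp: gdist_less_iff numeral_eq_enat)
  moreover have "xs \<noteq> []" using xs(1) by (simp add: walk_def)
  ultimately have "length xs = 1 \<or> length xs = 2" by (cases "length xs") auto
  then show ?thesis
    using xs by (auto simp: walk_Cons length_Suc_conv numeral_2_eq_2)
qed

lemma gdist_ge_2: "u \<noteq> v \<Longrightarrow> \<not> E u v \<Longrightarrow> 2 \<le> gdist V E u v"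
  using gdist_less_2 not_le by metis

lemma gdist_less_1: "gdist V E u v < 1 \<Longrightarrow> u = v"
  by (auto simp: gdist_less_iff one_enat_def walk_def hd_conv_nth last_conv_nth)

lemma gdist_refl: "u \<in> V \<Longrightarrow> gdist V E u u = 0"
  using gdist_le_walk[of V E "[u]" u u] by (simp add: zero_enat_def[symmetric])

lemma gdist_eq_1_iff:
  assumes "\<And>x. \<not> E x x" "u \<in> V" "v \<in> V"
  shows "gdist V E u v = 1 \<longleftrightarrow> E u v"
proof
  assume "gdist V E u v = 1"
  then have "gdist V E u v < 2" "\<not> gdist V E u v < 1" by (simp_all add: one_less_numeral_iff)
  moreover have "gdist V E u u = 0" using assms(2) by (rule gdist_refl)
  ultimately show "E u v" using gdist_less_2 by fastforce
next
  assume "E u v"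
  then have "gdist V E u v \<le> 1"
    using gdist_le_walk[of V E "[u, v]"] assms by (simp add: walk_Cons one_enat_def)
  moreover have "\<not> gdist V E u v < 1"
    using gdist_less_1 \<open>E u v\<close> assms(1) by metis
  ultimately show "gdist V E u v = 1" by simp
qed

lemma dsphere_1:
  assumes "\<And>x. \<not> E x x" "u \<in> V"
  shows "dsphere V E u 1 = nbrs V E u"
  using gdist_eq_1_iff[of E u V] assms unfolding dsphere_def nbrs_def by (auto simp: one_enat_def)

lemma gdist_le_diam: "u \<in> V \<Longrightarrow> v \<in> V \<Longrightarrow> gdist V E u v \<le> diam V E"
  unfolding diam_def by (meson SUP_upper2 SUP_upper)

lemma diam_le_iff: "diam V E \<le> d \<longleftrightarrow> (\<forall>u\<in>V. \<forall>v\<in>V. gdist V E u v \<le> d)"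
  unfolding diam_def by (simp add: SUP_le_iff)

lemma distance_regular_common_nbrs:
  assumes "distance_regular V E" "\<And>x. \<not> E x x"
    and "u \<in> V" "v \<in> V" "E u v" "u' \<in> V" "v' \<in> V" "E u' v'"
  shows "card (nbrs V E u \<inter> nbrs V E v) = card (nbrs V E u' \<inter> nbrs V E v')"
proof -
  have "gdist V E u v = enat 1" "gdist V E u' v' = enat 1"
    using assms gdist_eq_1_iff[of E] by (metis one_enat_def)+
  with assms(1,3,4,6,7)
  have "card (nbrs V E v \<inter> dsphere V E u 1) = card (nbrs V E v' \<inter> dsphere V E u' 1)"
    unfolding distance_regular_def by blast
  then show ?thesis using dsphere_1[of E, OF assms(2)] assms(3,6) by (simp add: Int_commute)
qed

lemma shortest_walk_no_shortcut:
  assumes w: "walk V E w" "4 \<le> length w"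
    and shortest: "\<And>w'. walk V E w' \<Longrightarrow> hd w' = hd w \<Longrightarrow> last w' = last w \<Longrightarrow> length w \<le> length w'"
  shows "w ! 0 \<noteq> w ! 2" "\<not> E (w ! 0) (w ! 2)" "w ! 0 \<noteq> w ! 3" "\<not> E (w ! 0) (w ! 3)"
    "\<forall>z\<in>V. \<not> (E (w ! 0) z \<and> E z (w ! 3))"
proof -
  have no_shortcut: "j \<le> length ps"
    if "j < length w" "walk V E (ps @ drop j w)" "hd (ps @ drop j w) = w ! 0" for ps j
  proof -
    have "last (ps @ drop j w) = last w" using that(1) by (simp add: last_drop)
    moreover have "hd w = w ! 0" using w(2) by (cases w) auto
    ultimately have "length w \<le> length (ps @ drop j w)" using that shortest by metis
    then show ?thesis using that(1) by simp
  qed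
  have drop: "walk V E (drop j w)" "drop j w \<noteq> []" "hd (drop j w) = w ! j" if "j < length w" for j
    using walk_drop[OF w(1) that] that by (auto simp: hd_drop_conv_nth)
  have start: "w ! 0 \<in> V" using w by (auto simp: walk_def)
  show "w ! 0 \<noteq> w ! 2" using no_shortcut[of 2 "[]"] drop[of 2] w(2) by auto
  show "\<not> E (w ! 0) (w ! 2)" using no_shortcut[of 2 "[w ! 0]"] drop[of 2] start w(2) by (auto simp: walk_Cons)
  show "w ! 0 \<noteq> w ! 3" using no_shortcut[of 3 "[]"] drop[of 3] w(2) by auto
  show "\<not> E (w ! 0) (w ! 3)" using no_shortcut[of 3 "[w ! 0]"] drop[of 3] start w(2) by (auto simp: walk_Cons)
  show "\<forall>z\<in>V. \<not> (E (w ! 0) z \<and> E z (w ! 3))"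
    using no_shortcut[of 3 "[w ! 0, _]"] drop[of 3] start w(2) by (auto simp: walk_Cons)
qed

lemma gdist_finite_walk:
  assumes "gdist V E u v < \<infinity>"
  obtains xs where "walk V E xs" "hd xs = u" "last xs = v"
  using assms that unfolding gdist_less_iff by blast

lemma diam_finite_gdist: "diam V E < \<infinity> \<Longrightarrow> u \<in> V \<Longrightarrow> v \<in> V \<Longrightarrow> gdist V E u v < \<infinity>"
  by (rule le_less_trans[OF gdist_le_diam])

lemma diam_ge_3_witness:
  assumes "3 \<le> diam V E" "diam V E < \<infinity>"
  obtains x a b y where "x \<in> V" "a \<in> V" "b \<in> V" "y \<in> V" "E x a" "E a b"
    "x \<noteq> b" "\<not> E x b" "x \<noteq> y" "\<not> E x y" "\<forall>z\<in>V. \<not> (E x z \<and> E z y)"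
proof -
  have "\<not> diam V E \<le> 2"
    using assms(1) order.trans[of 3 "diam V E" 2] by (auto simp: numeral_eq_enat)
  then obtain u v where uv: "u \<in> V" "v \<in> V" "\<not> gdist V E u v \<le> 2"
    by (auto simp: diam_le_iff)
  let ?walk = "\<lambda>xs. walk V E xs \<and> hd xs = u \<and> last xs = v"
  obtain w where w: "?walk w" and shortest: "\<And>w'. ?walk w' \<Longrightarrow> length w \<le> length w'"
    using gdist_finite_walk[OF diam_finite_gdist[OF assms(2) uv(1,2)]] ex_has_least_nat[of ?walk _ length]
    by metis
  have "\<not> enat (length w - 1) \<le> 2"
    using uv(3) gdist_le_walk[of V E w u v] w order.trans by blast
  then have len: "4 \<le> length w" by (simp add: numeral_eq_enat)
  have "w ! j \<in> V" if "j < 4" for j using w len that by (auto simp: walk_def)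
  moreover have "E (w ! j) (w ! Suc j)" if "j < 2" for j using w len that by (auto simp: walk_def)
  moreover note shortest_walk_no_shortcut[of V E w] w len shortest
  ultimately show ?thesis
    by (intro that[of "w ! 0" "w ! 1" "w ! 2" "w ! 3"]) (auto simp: numeral_eq_Suc)
qed

definition cam_partition ::
    "'a set \<Rightarrow> ('a \<Rightarrow> 'a \<Rightarrow> bool) \<Rightarrow> nat \<Rightarrow> (nat \<Rightarrow> nat \<Rightarrow> nat) \<Rightarrow> ('a \<Rightarrow> nat) \<Rightarrow> 'a \<Rightarrow> bool" where
  "cam_partition V E m C P u \<longleftrightarrow>
     (\<forall>x\<in>V. P x \<in> {1..m}) \<and> {x\<in>V. P x = 1} = {u} \<and> (\<forall>i\<in>{1..m}. \<exists>x\<in>V. P x = i) \<and>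
     (\<forall>i\<in>{1..m}. \<forall>j\<in>{1..m}. \<forall>y\<in>V. P y = j \<longrightarrow> card {x\<in>V. P x = i \<and> E x y} = C i j)"

lemma highly_regular_iff:
  "highly_regular V E \<longleftrightarrow> (\<exists>m C. ((2 \<le> m \<and> m < card V) \<or> (m = card V \<and> card V = 2)) \<and>
     (\<forall>u\<in>V. \<exists>P. cam_partition V E m C P u))"
  unfolding highly_regular_def cam_partition_def by (rule refl)

lemma
  assumes "cam_partition V E m C P u"
  shows cam_partition_range: "x \<in> V \<Longrightarrow> P x \<in> {1..m}"
    and cam_partition_root: "{x\<in>V. P x = 1} = {u}"
    and cam_partition_nonempty: "i \<in> {1..m} \<Longrightarrow> \<exists>x\<in>V. P x = i"
    and cam_partition_card: "i \<in> {1..m} \<Longrightarrow> y \<in> V \<Longrightarrow> card {x\<in>V. P x = i \<and> E x y} = C i (P y)"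
  using assms unfolding cam_partition_def by blast+

lemma card_edges_double_count:
  assumes "finite A" "finite B"
    and "\<And>y. y \<in> B \<Longrightarrow> card {x\<in>A. E x y} = c"
    and "\<And>x. x \<in> A \<Longrightarrow> card {y\<in>B. E x y} = d"
  shows "card B * c = card A * d"
proof -
  have "card B * c = (\<Sum>y\<in>B. \<Sum>x\<in>A. if E x y then 1 else 0)"
    using assms by (simp add: sum.inter_filter[symmetric])
  also have "\<dots> = (\<Sum>x\<in>A. \<Sum>y\<in>B. if E x y then 1 else 0)"
    by (rule sum.swap)
  also have "\<dots> = card A * d"
    using assms by (simp add: sum.inter_filter[symmetric])
  finally show ?thesis .
qed

lemma cam_partition_double_count:
  assumes g: "graph V E" and P: "cam_partition V E m C P u" and ij: "i \<in> {1..m}" "j \<in> {1..m}"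
  shows "card {x\<in>V. P x = j} * C i j = card {x\<in>V. P x = i} * C j i"
proof (rule card_edges_double_count)
  show "finite {x\<in>V. P x = i}" "finite {x\<in>V. P x = j}" using g by (simp_all add: graph_def)
next
  fix y assume "y \<in> {x\<in>V. P x = j}"
  then show "card {x\<in>{x\<in>V. P x = i}. E x y} = C i j"
    using cam_partition_card[OF P ij(1)] by (simp add: conj_assoc)
next
  fix x assume "x \<in> {x\<in>V. P x = i}"
  moreover have "{y\<in>{y\<in>V. P y = j}. E x y} = {y\<in>V. P y = j \<and> E y x}"
    using g by (auto simp: graph_def)
  ultimately show "card {y\<in>{y\<in>V. P y = j}. E x y} = C j i"
    using cam_partition_card[OF P ij(2)] by simp
qed

lemma cam_partition_cell_card_eq:
  assumes g: "graph V E" and P: "cam_partition V E m C P u" and P': "cam_partition V E m C P' u'"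
    and conn: "\<And>v. v \<in> V \<Longrightarrow> gdist V E u v < \<infinity>"
    and i: "i \<in> {1..m}"
  shows "card {x\<in>V. P x = i} = card {x\<in>V. P' x = i}"
proof -
  define S where "S k = card {x\<in>V. P x = k}" for k
  define S' where "S' k = card {x\<in>V. P' x = k}" for k
  note PV = cam_partition_range[OF P]
  have step: "S (P b) = S' (P b)" if "S (P a) = S' (P a)" "a \<in> V" "b \<in> V" "E a b" for a b
  proof -
    have "a \<in> {x\<in>V. P x = P a \<and> E x b}" using that by simp
    moreover have "card {x\<in>V. P x = P a \<and> E x b} = C (P a) (P b)"
      using cam_partition_card[OF P PV] that(2,3) by blast
    moreover have "finite {x\<in>V. P x = P a \<and> E x b}" using g by (simp add: graph_def)
    ultimately have "C (P a) (P b) > 0" by (metis card_gt_0_iff empty_iff)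
    moreover have "S (P b) * C (P a) (P b) = S (P a) * C (P b) (P a)"
      using cam_partition_double_count[OF g P, of "P a" "P b"] PV that(2,3) by (simp add: S_def)
    moreover have "S' (P b) * C (P a) (P b) = S' (P a) * C (P b) (P a)"
      using cam_partition_double_count[OF g P', of "P a" "P b"] PV that(2,3) by (simp add: S'_def)
    ultimately show ?thesis using that(1) by (metis mult_cancel2 not_gr0)
  qed
  obtain v where v: "v \<in> V" "P v = i" using cam_partition_nonempty[OF P i] by blast
  obtain w where w: "walk V E w" "hd w = u" "last w = v"
    using gdist_finite_walk[OF conn[OF v(1)]] by blast
  have "S (P (w ! t)) = S' (P (w ! t))" if "t < length w" for t
    using that
  proof (induction t)
    case 0
    have "w ! 0 = u" "u \<in> V" using w by (auto simp: walk_def hd_conv_nth)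
    moreover have cells: "{x\<in>V. P x = 1} = {u}" "{x\<in>V. P' x = 1} = {u'}"
      using cam_partition_root[OF P] cam_partition_root[OF P'] by blast+
    ultimately have "P (w ! 0) = 1" by blast
    then show ?case unfolding S_def S'_def by (simp only: cells) simp
  next
    case (Suc t)
    have "w ! t \<in> V" "w ! Suc t \<in> V" "E (w ! t) (w ! Suc t)"
      using w(1) Suc.prems by (auto simp: walk_def)
    then show ?case using step Suc by simp
  qed
  moreover have "w ! (length w - 1) = v" "w \<noteq> []" using w by (auto simp: walk_def last_conv_nth)
  ultimately show ?thesis using v(2) unfolding S_def S'_def by fastforce
qed

lemma cam_partition_degree:
  assumes g: "graph V E" and P: "cam_partition V E m C P u"
  shows "card (nbrs V E u) = (\<Sum>i=1..m. C i 1)"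
proof -
  have u: "u \<in> V" "P u = 1" using cam_partition_root[OF P] by blast+
  have "nbrs V E u = (\<Union>i\<in>{1..m}. {x\<in>V. P x = i \<and> E x u})"
    using cam_partition_range[OF P] g by (auto simp: nbrs_def graph_def)
  then have "card (nbrs V E u) = (\<Sum>i=1..m. card {x\<in>V. P x = i \<and> E x u})"
    using g by (simp add: card_UN_disjoint graph_def disjoint_iff)
  also have "\<dots> = (\<Sum>i=1..m. C i 1)"
    using cam_partition_card[OF P _ u(1)] u(2) by simp
  finally show ?thesis .
qed

lemma highly_regular_regular:
  assumes "graph V E" "highly_regular V E"
  obtains k where "\<And>v. v \<in> V \<Longrightarrow> card (nbrs V E v) = k"
  using assms cam_partition_degree unfolding highly_regular_iff by metis

lemma cam_partition_compl:
  assumes g: "graph V E" and P: "cam_partition V E m C P u"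
    and sizes: "\<And>i. i \<in> {1..m} \<Longrightarrow> card {x\<in>V. P x = i} = s i"
  shows "cam_partition V (compl_graph V E) m (\<lambda>i j. s i - (if i = j then 1 else 0) - C i j) P u"
  unfolding cam_partition_def
proof (intro conjI ballI impI)
  fix i j y assume ij: "i \<in> {1..m}" "j \<in> {1..m}" and y: "y \<in> V" "P y = j"
  let ?nonnbrs = "{x\<in>V. P x = i \<and> E x y} \<union> (if i = j then {y} else {})"
  have fin: "finite V" and irr: "\<And>x. \<not> E x x" using g by (auto simp: graph_def)
  have "{x\<in>V. P x = i \<and> compl_graph V E x y} = {x\<in>V. P x = i} - ?nonnbrs"
    using y by (auto simp: compl_graph_def)
  moreover have "?nonnbrs \<subseteq> {x\<in>V. P x = i}" using y by auto
  moreover have "card ?nonnbrs = C i j + (if i = j then 1 else 0)"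
    using cam_partition_card[OF P ij(1) y(1)] y(2) fin irr by auto
  ultimately show "card {x\<in>V. P x = i \<and> compl_graph V E x y} = s i - (if i = j then 1 else 0) - C i j"
    using fin sizes[OF ij(1)] by (simp add: card_Diff_subset finite_subset)
qed (use cam_partition_range[OF P] cam_partition_root[OF P] cam_partition_nonempty[OF P] in auto)

lemma highly_regular_compl:
  assumes g: "graph V E" and hr: "highly_regular V E"
    and conn: "\<And>u v. u \<in> V \<Longrightarrow> v \<in> V \<Longrightarrow> gdist V E u v < \<infinity>"
  shows "highly_regular V (compl_graph V E)"
proof -
  obtain m C where mC: "(2 \<le> m \<and> m < card V) \<or> (m = card V \<and> card V = 2)"
    and HP: "\<forall>u\<in>V. \<exists>P. cam_partition V E m C P u"
    using hr unfolding highly_regular_iff by blast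
  then obtain x0 where "x0 \<in> V" by fastforce
  with HP obtain P0 where P0: "cam_partition V E m C P0 x0" by blast
  define s where "s i = card {x\<in>V. P0 x = i}" for i
  define C' where "C' i j = s i - (if i = j then 1 else 0) - C i j" for i j
  have compl_partition: "cam_partition V (compl_graph V E) m C' P u"
    if "cam_partition V E m C P u" for P u
    unfolding C'_def
  proof (rule cam_partition_compl[OF g that])
    have "u \<in> V" using cam_partition_root[OF that] by blast
    show "card {x\<in>V. P x = i} = s i" if "i \<in> {1..m}" for i
      unfolding s_def
      by (rule cam_partition_cell_card_eq[OF g \<open>cam_partition V E m C P u\<close> P0 _ that])
        (rule conn[OF \<open>u \<in> V\<close>])
  qed
  show ?thesis
    unfolding highly_regular_iff
  proof (intro exI[of _ m] exI[of _ C'] conjI ballI)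
    fix u assume "u \<in> V"
    with HP compl_partition show "\<exists>P. cam_partition V (compl_graph V E) m C' P u" by blast
  qed (fact mC)
qed

lemma card_compl_common_nbrs:
  assumes g: "graph V E" and pq: "p \<in> V" "q \<in> V" "p \<noteq> q" "\<not> E p q"
  shows "card V = 2 + card (nbrs V E p \<union> nbrs V E q)
     + card (nbrs V (compl_graph V E) p \<inter> nbrs V (compl_graph V E) q)"
proof -
  have fin: "finite V" and sym: "\<And>x y. E x y \<Longrightarrow> E y x" and irr: "\<And>x. \<not> E x x"
    using g by (auto simp: graph_def)
  let ?N = "nbrs V E p \<union> nbrs V E q"
  let ?L = "nbrs V (compl_graph V E) p \<inter> nbrs V (compl_graph V E) q"
  have V: "V = insert p (insert q (?N \<union> ?L))"
    using pq by (auto simp: nbrs_def compl_graph_def)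
  have disj: "p \<notin> insert q (?N \<union> ?L)" "q \<notin> ?N \<union> ?L" "?N \<inter> ?L = {}"
    using pq irr sym by (auto simp: nbrs_def compl_graph_def)
  have finN: "finite ?N" "finite ?L" using fin by (auto simp: nbrs_def)
  have "card V = Suc (card (insert q (?N \<union> ?L)))"
    by (subst V, rule card_insert_disjoint) (use finN disj in auto)
  also have "card (insert q (?N \<union> ?L)) = Suc (card (?N \<union> ?L))"
    by (rule card_insert_disjoint) (use finN disj in auto)
  also have "card (?N \<union> ?L) = card ?N + card ?L"
    using finN disj(3) by (rule card_Un_disjoint)
  finally show ?thesis by simp
qed

lemma card_compl_common_nbrs_regular:
  assumes g: "graph V E" and deg: "\<And>v. v \<in> V \<Longrightarrow> card (nbrs V E v) = k"
    and pq: "p \<in> V" "q \<in> V" "p \<noteq> q" "\<not> E p q"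
  shows "card V + card (nbrs V E p \<inter> nbrs V E q)
     = 2 + 2 * k + card (nbrs V (compl_graph V E) p \<inter> nbrs V (compl_graph V E) q)"
proof -
  have "finite (nbrs V E v)" for v using g by (simp add: graph_def nbrs_def)
  then show ?thesis
    using card_compl_common_nbrs[OF g pq] card_Un_Int[of "nbrs V E p" "nbrs V E q"] deg pq(1,2) by simp
qed

lemma gdist_compl_le_2:
  assumes g: "graph V E" and deg: "\<And>v. v \<in> V \<Longrightarrow> card (nbrs V E v) = k" and small: "2 * k < card V"
    and pq: "p \<in> V" "q \<in> V"
  shows "gdist V (compl_graph V E) p q \<le> 2"
proof -
  consider "p = q" | "p \<noteq> q" "\<not> E p q" | "E p q" by blast
  then show ?thesis
  proof cases
    case 1
    then show ?thesis using gdist_refl[OF pq(1)] by simp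
  next
    case 2
    then have "compl_graph V E p q" using pq by (simp add: compl_graph_def)
    then have "gdist V (compl_graph V E) p q \<le> 1"
      using gdist_le_walk[of V "compl_graph V E" "[p, q]"] pq by (simp add: walk_Cons one_enat_def)
    then show ?thesis by (rule order.trans) simp
  next
    case 3
    have "card (nbrs V E p \<union> nbrs V E q) < card V"
      using card_Un_le[of "nbrs V E p" "nbrs V E q"] deg pq small by simp
    moreover have "finite (nbrs V E p \<union> nbrs V E q)" using g by (simp add: graph_def nbrs_def)
    ultimately have "\<not> V \<subseteq> nbrs V E p \<union> nbrs V E q" using card_mono by (meson not_le)
    then obtain z where z: "z \<in> V" "z \<notin> nbrs V E p \<union> nbrs V E q" by blast
    have "compl_graph V E p z" "compl_graph V E z q"
      using z pq 3 g by (auto simp: nbrs_def compl_graph_def graph_def)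
    then show ?thesis
      using gdist_le_walk[of V "compl_graph V E" "[p, z, q]" p q] pq z
      by (simp add: walk_Cons numeral_eq_enat numeral_2_eq_2)
  qed
qed

theorem theorem4p1:
  fixes V :: "'a set" and E :: "'a \<Rightarrow> 'a \<Rightarrow> bool"
  assumes "graph V E"
    and "highly_regular V E"
    and "3 \<le> diam V E" and "diam V E < \<infinity>"
  shows "highly_regular V (compl_graph V E) \<and> diam V (compl_graph V E) = 2 \<and>
         \<not> distance_regular V (compl_graph V E)"
proof -
  let ?E' = "compl_graph V E"
  have sym: "\<And>x y. E x y \<Longrightarrow> E y x" and fin: "\<And>v. finite (nbrs V E v)"
    using assms(1) by (auto simp: graph_def nbrs_def)
  obtain k where deg: "\<And>v. v \<in> V \<Longrightarrow> card (nbrs V E v) = k"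
    using highly_regular_regular[OF assms(1,2)] by blast
  obtain x a b y where V: "x \<in> V" "a \<in> V" "b \<in> V" "y \<in> V" and path: "E x a" "E a b"
    and xb: "x \<noteq> b" "\<not> E x b" and xy: "x \<noteq> y" "\<not> E x y" "\<forall>z\<in>V. \<not> (E x z \<and> E z y)"
    using diam_ge_3_witness[OF assms(3,4)] .
  have "nbrs V E x \<inter> nbrs V E y = {}" using xy(3) sym by (auto simp: nbrs_def)
  then have common_xy: "card V = 2 + 2 * k + card (nbrs V ?E' x \<inter> nbrs V ?E' y)"
    using card_compl_common_nbrs_regular[OF assms(1) deg V(1,4) xy(1,2)] by simp
  have "a \<in> nbrs V E x \<inter> nbrs V E b" using path sym V by (auto simp: nbrs_def)
  then have "0 < card (nbrs V E x \<inter> nbrs V E b)" using fin by (auto simp: card_gt_0_iff)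
  then have common_xb: "card V < 2 + 2 * k + card (nbrs V ?E' x \<inter> nbrs V ?E' b)"
    using card_compl_common_nbrs_regular[OF assms(1) deg V(1,3) xb] by simp
  have "diam V ?E' \<le> 2"
    unfolding diam_le_iff using gdist_compl_le_2[OF assms(1) deg] common_xy by simp
  moreover have "2 \<le> diam V ?E'"
    using path(1) assms(1) order.trans[OF gdist_ge_2 gdist_le_diam[OF V(1,2)], of ?E']
    by (auto simp: compl_graph_def graph_def)
  moreover have "\<not> distance_regular V ?E'"
    using distance_regular_common_nbrs[of V ?E' x y x b] common_xy common_xb V xb xy
    by (auto simp: compl_graph_def)
  ultimately show ?thesis
    using highly_regular_compl[OF assms(1,2) diam_finite_gdist[OF assms(4)]] by simp
qed

end
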